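(* (i) Let $I,J$ be sets and $R\colon I\times J\to\{0,1\}\subseteq[0,1]$ a boolean ($\{0,1\}$-valued) relation. Then $f_R(x)\cdot f_R(y)\le f_R(x\cdot y)$ for all $x,y\in[0,1]^I$. (ii) Let $\mathbf A,\mathbf B$ be semisimple Pavelka algebras and $f\colon A\to B$, $g\colon B\to A$ with $f\leftrightarrows g$. If $f(x)\cdot f(y)\le f(x\cdot y)$ for all $x,y\in A$, then the relation $R\colon\mathrm{Spec_M}\mathbf A\times\mathrm{Spec_M}\mathbf B\to[0,1]$, $R(F,G)=\bigwedge_{a\in A}(f(a)/G\rightarrow a/F)$, is $\{0,1\}$-valued.
   Context: An MV-algebra $(A;\oplus,\neg,0)$ carries derived operations $1=\neg0$, $x\cdot y=\neg(\neg x\oplus\neg y)$, $x\rightarrow y=\neg x\oplus y$, order $x\le y$ iff $\neg x\oplus y=1$. The standard MV-algebra is $[0,1]$ with $x\oplus y=\min\{x+y,1\}$, $\neg x=1-x$. A Pavelka algebra is $\mathbf A=(A;\oplus,\neg,\{\mathbf r\mid r\in[0,1]\cap\mathbb Q\})$ with $(A;\oplus,\neg,\mathbf 0)$ an MV-algebra, $\mathbf r\oplus\mathbf s=\mathbf t$ whenever $\min\{r+s,1\}=t$, $\neg\mathbf r=\mathbf s$ whenever $1-r=s$. Filters are filters of the MV-reduct; $\mathrm{Spec_M}\mathbf A$ is the set of maximal proper filters; for $F\in\mathrm{Spec_M}\mathbf A$, $\mathbf A/F$ embeds uniquely into the standard Pavelka algebra $[0,1]$ and $x/F$ is identified with its image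 in $[0,1]$. $\mathbf A$ is semisimple if its MV-reduct is a subdirect product of simple MV-algebras. $f\leftrightarrows g$ means: $f,g$ monotone, $x\le f(y)$ iff $g(x)\le y$ for all $y\in A,x\in B$, and $\mathbf r\rightarrow f(y)=f(\mathbf r\rightarrow y)$ for all $y\in A$ and constants $\mathbf r$. For $R\colon I\times J\to[0,1]$: $f_R(x)(j)=\bigwedge_{i\in I}(R(i,j)\rightarrow x(i))$ for $x\in[0,1]^I$, with operations of $[0,1]$ applied componentwise. *)

theory Defs
  imports Complex_Main
begin

definition r_imp :: "real \<Rightarrow> real \<Rightarrow> real" where
  "r_imp a b = min 1 (1 - a + b)"

definition r_times :: "real \<Rightarrow> real \<Rightarrow> real" where
  "r_times a b = max 0 (a + b - 1)"

text \<open>Meet in the complete lattice [0,1] (the empty meet is the top element 1).\<close>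
definition inf01 :: "real set \<Rightarrow> real" where
  "inf01 S = (if S = {} then 1 else Inf S)"

definition f_R :: "'i set \<Rightarrow> ('i \<Rightarrow> 'j \<Rightarrow> real) \<Rightarrow> ('i \<Rightarrow> real) \<Rightarrow> 'j \<Rightarrow> real" where
  "f_R I R x j = inf01 ((\<lambda>i. r_imp (R i j) (x i)) ` I)"

record 'a pav =
  carrier :: "'a set"
  plus :: "'a \<Rightarrow> 'a \<Rightarrow> 'a"
  neg :: "'a \<Rightarrow> 'a"
  cst :: "rat \<Rightarrow> 'a"

definition mv_one :: "('a, 'b) pav_scheme \<Rightarrow> 'a" where
  "mv_one A = neg A (cst A 0)"

definition mv_times :: "('a, 'b) pav_scheme \<Rightarrow> 'a \<Rightarrow> 'a \<Rightarrow> 'a" where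
  "mv_times A x y = neg A (plus A (neg A x) (neg A y))"

definition mv_imp :: "('a, 'b) pav_scheme \<Rightarrow> 'a \<Rightarrow> 'a \<Rightarrow> 'a" where
  "mv_imp A x y = plus A (neg A x) y"

definition mv_le :: "('a, 'b) pav_scheme \<Rightarrow> 'a \<Rightarrow> 'a \<Rightarrow> bool" where
  "mv_le A x y \<longleftrightarrow> plus A (neg A x) y = mv_one A"

definition is_mv :: "('a, 'b) pav_scheme \<Rightarrow> bool" where
  "is_mv A \<longleftrightarrow>
     cst A 0 \<in> carrier A \<and>
     (\<forall>x\<in>carrier A. \<forall>y\<in>carrier A. plus A x y \<in> carrier A) \<and>
     (\<forall>x\<in>carrier A. neg A x \<in> carrier A) \<and>
     (\<forall>x\<in>carrier A. \<forall>y\<in>carrier A. \<forall>z\<in>carrier A.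
        plus A x (plus A y z) = plus A (plus A x y) z) \<and>
     (\<forall>x\<in>carrier A. \<forall>y\<in>carrier A. plus A x y = plus A y x) \<and>
     (\<forall>x\<in>carrier A. plus A x (cst A 0) = x) \<and>
     (\<forall>x\<in>carrier A. neg A (neg A x) = x) \<and>
     (\<forall>x\<in>carrier A. plus A x (neg A (cst A 0)) = neg A (cst A 0)) \<and>
     (\<forall>x\<in>carrier A. \<forall>y\<in>carrier A.
        plus A (neg A (plus A (neg A x) y)) y = plus A (neg A (plus A (neg A y) x)) x)"

definition is_pavelka :: "('a, 'b) pav_scheme \<Rightarrow> bool" where
  "is_pavelka A \<longleftrightarrow> is_mv A \<and>
     (\<forall>r. 0 \<le> r \<and> r \<le> 1 \<longrightarrow> cst A r \<in> carrier A) \<and>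
     (\<forall>r s. 0 \<le> r \<and> r \<le> 1 \<and> 0 \<le> s \<and> s \<le> 1 \<longrightarrow>
        plus A (cst A r) (cst A s) = cst A (min (r + s) 1)) \<and>
     (\<forall>r. 0 \<le> r \<and> r \<le> 1 \<longrightarrow> neg A (cst A r) = cst A (1 - r))"

definition mv_filter :: "('a, 'b) pav_scheme \<Rightarrow> 'a set \<Rightarrow> bool" where
  "mv_filter A F \<longleftrightarrow> F \<subseteq> carrier A \<and> mv_one A \<in> F \<and>
     (\<forall>x\<in>F. \<forall>y\<in>carrier A. mv_le A x y \<longrightarrow> y \<in> F) \<and>
     (\<forall>x\<in>F. \<forall>y\<in>F. mv_times A x y \<in> F)"

definition maximal_filter :: "('a, 'b) pav_scheme \<Rightarrow> 'a set \<Rightarrow> bool" where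
  "maximal_filter A F \<longleftrightarrow> mv_filter A F \<and> F \<noteq> carrier A \<and>
     (\<forall>G. mv_filter A G \<and> F \<subseteq> G \<and> G \<noteq> carrier A \<longrightarrow> G = F)"

definition spec_M :: "('a, 'b) pav_scheme \<Rightarrow> 'a set set" where
  "spec_M A = {F. maximal_filter A F}"

definition semisimple :: "('a, 'b) pav_scheme \<Rightarrow> bool" where
  "semisimple A \<longleftrightarrow> carrier A \<inter> \<Inter> (spec_M A) = {mv_one A}"

definition std_hom :: "('a, 'b) pav_scheme \<Rightarrow> ('a \<Rightarrow> real) \<Rightarrow> bool" where
  "std_hom A h \<longleftrightarrow>
     (\<forall>x\<in>carrier A. 0 \<le> h x \<and> h x \<le> 1) \<and>
     (\<forall>x\<in>carrier A. \<forall>y\<in>carrier A. h (plus A x y) = min (h x + h y) 1) \<and>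
     (\<forall>x\<in>carrier A. h (neg A x) = 1 - h x) \<and>
     (\<forall>r. 0 \<le> r \<and> r \<le> 1 \<longrightarrow> h (cst A r) = real_of_rat r)"

text \<open>x/F: image of x under the (unique) embedding of A/F into [0,1], i.e. the value at x
  of the unique homomorphism A \<rightarrow> [0,1] whose filter (preimage of 1) is F.\<close>
definition quot_val :: "('a, 'b) pav_scheme \<Rightarrow> 'a set \<Rightarrow> 'a \<Rightarrow> real" where
  "quot_val A F x = (THE v. \<exists>h. std_hom A h \<and> {y\<in>carrier A. h y = 1} = F \<and> v = h x)"

definition adjoint_pair ::
  "('a, 'c) pav_scheme \<Rightarrow> ('b, 'd) pav_scheme \<Rightarrow> ('a \<Rightarrow> 'b) \<Rightarrow> ('b \<Rightarrow> 'a) \<Rightarrow> bool" where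
  "adjoint_pair A B f g \<longleftrightarrow>
     (\<forall>y\<in>carrier A. f y \<in> carrier B) \<and> (\<forall>x\<in>carrier B. g x \<in> carrier A) \<and>
     (\<forall>y1\<in>carrier A. \<forall>y2\<in>carrier A. mv_le A y1 y2 \<longrightarrow> mv_le B (f y1) (f y2)) \<and>
     (\<forall>x1\<in>carrier B. \<forall>x2\<in>carrier B. mv_le B x1 x2 \<longrightarrow> mv_le A (g x1) (g x2)) \<and>
     (\<forall>y\<in>carrier A. \<forall>x\<in>carrier B. mv_le B x (f y) \<longleftrightarrow> mv_le A (g x) y) \<and>
     (\<forall>r. 0 \<le> r \<and> r \<le> 1 \<longrightarrow>
        (\<forall>y\<in>carrier A. mv_imp B (cst B r) (f y) = f (mv_imp A (cst A r) y)))"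

definition rel_R ::
  "('a, 'c) pav_scheme \<Rightarrow> ('b, 'd) pav_scheme \<Rightarrow> ('a \<Rightarrow> 'b) \<Rightarrow> 'a set \<Rightarrow> 'b set \<Rightarrow> real" where
  "rel_R A B f F G = inf01 ((\<lambda>a. r_imp (quot_val B G (f a)) (quot_val A F a)) ` carrier A)"

end

(*
  (i) When R takes only the values 0 and 1, each component r_imp (R i j) (x i) is either 1 or
  x i, and the Lukasiewicz product is monotone, so the inequality is inherited from the meets
  of its pointwise instances.

  (ii) For a maximal filter F of a Pavelka algebra, x/F is the real cut defined by the rationals
  r with r -> x in F. Prelinearity makes A/F linearly ordered and maximality makes it
  archimedean, so this cut is a homomorphism onto a subalgebra of [0,1] with kernel F, and it is
  the only one because it is fixed on the rational constants. If a/F < f(a)/G for some a, take a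
  rational q strictly in between and b = q -> a: then f(b)/G = 1 and b/F = 1 - d with d > 0.
  Submultiplicativity keeps f(b^n)/G = 1 while b^n/F = max 0 (1 - n d) reaches 0, so
  R(F,G) = 0; otherwise all the implications are 1 and R(F,G) = 1.
*)
theory Submission
  imports Defs
begin

lemma of_rat_min: "of_rat (min a b) = min (of_rat a) (of_rat b :: 'a::linordered_field)"
  by (simp add: min_def of_rat_less_eq)

lemma of_rat_max: "of_rat (max a b) = max (of_rat a) (of_rat b :: 'a::linordered_field)"
  by (simp add: max_def of_rat_less_eq)

lemma real_eq_by_rat_cuts:
  fixes c d :: real
  assumes "c \<in> {0..1}" "d \<in> {0..1}"
    and below: "\<And>r. 0 \<le> r \<Longrightarrow> r \<le> 1 \<Longrightarrow> of_rat r < c \<Longrightarrow> of_rat r \<le> d"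
    and above: "\<And>r. 0 \<le> r \<Longrightarrow> r \<le> 1 \<Longrightarrow> c < of_rat r \<Longrightarrow> d \<le> of_rat r"
  shows "c = d"
proof (rule ccontr)
  assume "c \<noteq> d"
  from assms(1,2) have bounds: "0 \<le> c" "c \<le> 1" "0 \<le> d" "d \<le> 1"
    by simp_all
  from \<open>c \<noteq> d\<close> consider "c < d" | "d < c"
    by linarith
  then show False
  proof cases
    case 1
    then obtain r where r: "c < of_rat r" "of_rat r < d"
      using of_rat_dense by blast
    with bounds have "0 \<le> (of_rat r :: real)" "(of_rat r :: real) \<le> 1"
      by linarith+
    with r above show False
      by fastforce
  next
    case 2
    then obtain r where r: "d < of_rat r" "of_rat r < c"
      using of_rat_dense by blast
    with bounds have "0 \<le> (of_rat r :: real)" "(of_rat r :: real) \<le> 1"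
      by linarith+
    with r below show False
      by fastforce
  qed
qed

lemma inf01_eq_minimum: "m \<in> S \<Longrightarrow> (\<And>s. s \<in> S \<Longrightarrow> m \<le> s) \<Longrightarrow> inf01 S = m"
  unfolding inf01_def by (auto intro: cInf_eq_minimum)

lemma inf01_lower: "s \<in> S \<Longrightarrow> bdd_below S \<Longrightarrow> inf01 S \<le> s"
  unfolding inf01_def by (auto intro: cInf_lower)

lemma inf01_greatest: "S \<noteq> {} \<Longrightarrow> (\<And>s. s \<in> S \<Longrightarrow> c \<le> s) \<Longrightarrow> c \<le> inf01 S"
  unfolding inf01_def by (auto intro: cInf_greatest)

lemma r_times_mono: "a \<le> a' \<Longrightarrow> b \<le> b' \<Longrightarrow> r_times a b \<le> r_times a' b'"
  by (simp add: r_times_def)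

lemma r_times_r_imp_boolean:
  "c \<in> {0, 1} \<Longrightarrow> x \<in> {0..1} \<Longrightarrow> y \<in> {0..1} \<Longrightarrow>
    r_times (r_imp c x) (r_imp c y) \<le> r_imp c (r_times x y)"
  by (auto simp: r_imp_def r_times_def)

lemma f_R_r_times:
  assumes R: "\<forall>i\<in>I. R i j \<in> {0, 1}" and x: "\<forall>i\<in>I. x i \<in> {0..1}" and y: "\<forall>i\<in>I. y i \<in> {0..1}"
  shows "r_times (f_R I R x j) (f_R I R y j) \<le> f_R I R (\<lambda>i. r_times (x i) (y i)) j"
proof (cases "I = {}")
  case True
  then show ?thesis
    by (simp add: f_R_def inf01_def r_times_def)
next
  case False
  have bdd: "bdd_below ((\<lambda>i. r_imp (R i j) (z i)) ` I)" if "\<forall>i\<in>I. z i \<in> {0..1}" for z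
    unfolding bdd_below_def using R that by (auto simp: r_imp_def intro!: exI[of _ 0])
  have "r_times (f_R I R x j) (f_R I R y j) \<le> r_imp (R i j) (r_times (x i) (y i))" if i: "i \<in> I" for i
  proof -
    have "r_times (f_R I R x j) (f_R I R y j) \<le> r_times (r_imp (R i j) (x i)) (r_imp (R i j) (y i))"
      unfolding f_R_def using i x y by (intro r_times_mono inf01_lower bdd) auto
    also have "\<dots> \<le> r_imp (R i j) (r_times (x i) (y i))"
      using i R x y by (simp add: r_times_r_imp_boolean)
    finally show ?thesis .
  qed
  with False show ?thesis
    unfolding f_R_def[of I R "\<lambda>i. r_times (x i) (y i)"] by (auto intro: inf01_greatest)
qed

section \<open>MV-algebras\<close>

locale mv_algebra =
  fixes A :: "('a, 'b) pav_scheme"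
  assumes mv: "is_mv A"
begin

abbreviation oplus (infixl "\<oplus>" 65) where "x \<oplus> y \<equiv> plus A x y"
abbreviation negation ("\<sim>_" [80] 80) where "\<sim>x \<equiv> neg A x"
abbreviation zero ("\<zero>") where "\<zero> \<equiv> cst A 0"
abbreviation one ("\<one>") where "\<one> \<equiv> mv_one A"
abbreviation odot (infixl "\<odot>" 70) where "x \<odot> y \<equiv> mv_times A x y"
abbreviation impl (infixr "\<rightharpoonup>" 60) where "x \<rightharpoonup> y \<equiv> mv_imp A x y"
abbreviation leq (infix "\<preceq>" 50) where "x \<preceq> y \<equiv> mv_le A x y"

lemma zero_closed [simp]: "\<zero> \<in> carrier A"
  using mv unfolding is_mv_def by blast

lemma oplus_closed [simp]: "x \<in> carrier A \<Longrightarrow> y \<in> carrier A \<Longrightarrow> x \<oplus> y \<in> carrier A"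
  using mv unfolding is_mv_def by blast

lemma neg_closed [simp]: "x \<in> carrier A \<Longrightarrow> \<sim>x \<in> carrier A"
  using mv unfolding is_mv_def by blast

lemma one_def: "\<one> = \<sim>\<zero>"
  by (simp add: mv_one_def)

lemma one_closed [simp]: "\<one> \<in> carrier A"
  by (simp add: one_def)

lemma odot_def: "x \<odot> y = \<sim>(\<sim>x \<oplus> \<sim>y)"
  by (simp add: mv_times_def)

lemma imp_def: "x \<rightharpoonup> y = \<sim>x \<oplus> y"
  by (simp add: mv_imp_def)

lemma odot_closed [simp]: "x \<in> carrier A \<Longrightarrow> y \<in> carrier A \<Longrightarrow> x \<odot> y \<in> carrier A"
  by (simp add: odot_def)

lemma imp_closed [simp]: "x \<in> carrier A \<Longrightarrow> y \<in> carrier A \<Longrightarrow> x \<rightharpoonup> y \<in> carrier A"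
  by (simp add: imp_def)

lemma oplus_assoc:
  "x \<in> carrier A \<Longrightarrow> y \<in> carrier A \<Longrightarrow> z \<in> carrier A \<Longrightarrow> x \<oplus> y \<oplus> z = x \<oplus> (y \<oplus> z)"
  using mv unfolding is_mv_def by metis

lemma oplus_commute: "x \<in> carrier A \<Longrightarrow> y \<in> carrier A \<Longrightarrow> x \<oplus> y = y \<oplus> x"
  using mv unfolding is_mv_def by metis

lemma oplus_left_commute:
  "x \<in> carrier A \<Longrightarrow> y \<in> carrier A \<Longrightarrow> z \<in> carrier A \<Longrightarrow> x \<oplus> (y \<oplus> z) = y \<oplus> (x \<oplus> z)"
  by (metis oplus_assoc oplus_commute)

lemmas oplus_ac = oplus_assoc oplus_commute oplus_left_commute

lemma oplus_zero [simp]: "x \<in> carrier A \<Longrightarrow> x \<oplus> \<zero> = x"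
  using mv unfolding is_mv_def by blast

lemma zero_oplus [simp]: "x \<in> carrier A \<Longrightarrow> \<zero> \<oplus> x = x"
  by (metis oplus_commute oplus_zero zero_closed)

lemma neg_neg [simp]: "x \<in> carrier A \<Longrightarrow> \<sim>\<sim>x = x"
  using mv unfolding is_mv_def by blast

lemma neg_one [simp]: "\<sim>\<one> = \<zero>"
  by (simp add: one_def)

lemma oplus_one [simp]: "x \<in> carrier A \<Longrightarrow> x \<oplus> \<one> = \<one>"
  using mv unfolding is_mv_def mv_one_def by blast

lemma one_oplus [simp]: "x \<in> carrier A \<Longrightarrow> \<one> \<oplus> x = \<one>"
  by (metis oplus_commute oplus_one one_closed)

text \<open>The Lukasiewicz axiom: the join \<open>\<sim>(\<sim>x \<oplus> y) \<oplus> y\<close> of \<open>x\<close> and \<open>y\<close> is commutative.\<close>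
lemma join_commute:
  "x \<in> carrier A \<Longrightarrow> y \<in> carrier A \<Longrightarrow> \<sim>(\<sim>x \<oplus> y) \<oplus> y = \<sim>(\<sim>y \<oplus> x) \<oplus> x"
  using mv unfolding is_mv_def by blast

lemma neg_oplus_self [simp]: "x \<in> carrier A \<Longrightarrow> \<sim>x \<oplus> x = \<one>"
  using join_commute[of x \<one>] by simp

lemma oplus_neg_self [simp]: "x \<in> carrier A \<Longrightarrow> x \<oplus> \<sim>x = \<one>"
  by (metis neg_oplus_self oplus_commute neg_closed)

lemma oplus_neg_oplus [simp]: "x \<in> carrier A \<Longrightarrow> y \<in> carrier A \<Longrightarrow> x \<oplus> (\<sim>x \<oplus> y) = \<one>"
  by (metis oplus_neg_self one_oplus oplus_assoc neg_closed)

lemma leq_def: "x \<preceq> y \<longleftrightarrow> \<sim>x \<oplus> y = \<one>"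
  by (simp add: mv_le_def)

lemma leq_refl [simp]: "x \<in> carrier A \<Longrightarrow> x \<preceq> x"
  by (simp add: leq_def)

lemma leq_antisym: "x \<in> carrier A \<Longrightarrow> y \<in> carrier A \<Longrightarrow> x \<preceq> y \<Longrightarrow> y \<preceq> x \<Longrightarrow> x = y"
  using join_commute[of x y] by (simp add: leq_def)

lemma leq_iff_oplus: "x \<in> carrier A \<Longrightarrow> y \<in> carrier A \<Longrightarrow> x \<preceq> y \<longleftrightarrow> (\<exists>w\<in>carrier A. y = x \<oplus> w)"
proof
  assume xy: "x \<in> carrier A" "y \<in> carrier A" "x \<preceq> y"
  then have "\<sim>(\<sim>y \<oplus> x) \<oplus> x = y"
    using join_commute[of x y] by (simp add: leq_def)
  with xy show "\<exists>w\<in>carrier A. y = x \<oplus> w"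
    by (metis neg_closed oplus_closed oplus_commute)
qed (auto simp: leq_def oplus_assoc[symmetric])

lemma leq_oplus_right [simp]: "x \<in> carrier A \<Longrightarrow> w \<in> carrier A \<Longrightarrow> x \<preceq> x \<oplus> w"
  using leq_iff_oplus by auto

lemma leq_oplus_left [simp]: "x \<in> carrier A \<Longrightarrow> w \<in> carrier A \<Longrightarrow> x \<preceq> w \<oplus> x"
  using leq_iff_oplus oplus_commute by auto

lemma leq_trans:
  "x \<in> carrier A \<Longrightarrow> y \<in> carrier A \<Longrightarrow> z \<in> carrier A \<Longrightarrow> x \<preceq> y \<Longrightarrow> y \<preceq> z \<Longrightarrow> x \<preceq> z"
  by (metis leq_iff_oplus oplus_closed oplus_assoc)

lemma zero_leq [simp]: "x \<in> carrier A \<Longrightarrow> \<zero> \<preceq> x"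
  by (simp add: leq_def one_def[symmetric])

lemma leq_zero_iff: "x \<in> carrier A \<Longrightarrow> x \<preceq> \<zero> \<longleftrightarrow> x = \<zero>"
  by (metis leq_antisym zero_leq zero_closed leq_refl)

lemma oplus_mono_left:
  assumes "x \<in> carrier A" "y \<in> carrier A" "w \<in> carrier A" "x \<preceq> y"
  shows "x \<oplus> w \<preceq> y \<oplus> w"
proof -
  obtain v where "v \<in> carrier A" "y = x \<oplus> v"
    using assms leq_iff_oplus by blast
  with assms have "y \<oplus> w = x \<oplus> w \<oplus> v"
    by (simp add: oplus_ac)
  with assms \<open>v \<in> carrier A\<close> show ?thesis
    by simp
qed

lemma neg_antimono: "x \<in> carrier A \<Longrightarrow> y \<in> carrier A \<Longrightarrow> x \<preceq> y \<Longrightarrow> \<sim>y \<preceq> \<sim>x"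
  by (simp add: leq_def oplus_commute)

lemma neg_odot: "x \<in> carrier A \<Longrightarrow> y \<in> carrier A \<Longrightarrow> \<sim>(x \<odot> y) = \<sim>x \<oplus> \<sim>y"
  by (simp add: odot_def)

lemma odot_commute: "x \<in> carrier A \<Longrightarrow> y \<in> carrier A \<Longrightarrow> x \<odot> y = y \<odot> x"
  by (simp add: odot_def oplus_commute)

lemma odot_assoc:
  "x \<in> carrier A \<Longrightarrow> y \<in> carrier A \<Longrightarrow> z \<in> carrier A \<Longrightarrow> x \<odot> y \<odot> z = x \<odot> (y \<odot> z)"
  by (simp add: odot_def oplus_assoc)

lemma odot_left_commute:
  "x \<in> carrier A \<Longrightarrow> y \<in> carrier A \<Longrightarrow> z \<in> carrier A \<Longrightarrow> x \<odot> (y \<odot> z) = y \<odot> (x \<odot> z)"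
  by (simp add: odot_def oplus_left_commute)

lemmas odot_ac = odot_assoc odot_commute odot_left_commute

lemma odot_one [simp]: "x \<in> carrier A \<Longrightarrow> x \<odot> \<one> = x"
  by (simp add: odot_def)

lemma one_odot [simp]: "x \<in> carrier A \<Longrightarrow> \<one> \<odot> x = x"
  by (simp add: odot_def)

lemma odot_mono_left:
  "x \<in> carrier A \<Longrightarrow> y \<in> carrier A \<Longrightarrow> w \<in> carrier A \<Longrightarrow> x \<preceq> y \<Longrightarrow> x \<odot> w \<preceq> y \<odot> w"
  unfolding odot_def by (intro neg_antimono oplus_mono_left) (auto intro: neg_antimono)

lemma odot_mono:
  assumes "x \<in> carrier A" "y \<in> carrier A" "u \<in> carrier A" "v \<in> carrier A" "x \<preceq> y" "u \<preceq> v"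
  shows "x \<odot> u \<preceq> y \<odot> v"
proof -
  have "x \<odot> u \<preceq> y \<odot> u"
    using assms by (simp add: odot_mono_left)
  moreover have "y \<odot> u \<preceq> y \<odot> v"
    using assms odot_mono_left[of u v y] by (simp add: odot_commute)
  ultimately show ?thesis
    using assms leq_trans[of "x \<odot> u" "y \<odot> u" "y \<odot> v"] by simp
qed

lemma residuation:
  "x \<in> carrier A \<Longrightarrow> y \<in> carrier A \<Longrightarrow> z \<in> carrier A \<Longrightarrow> x \<odot> y \<preceq> z \<longleftrightarrow> x \<preceq> y \<rightharpoonup> z"
  by (simp add: leq_def odot_def imp_def oplus_assoc)

lemma odot_eq_zero_iff:
  assumes "x \<in> carrier A" "y \<in> carrier A"
  shows "x \<odot> y = \<zero> \<longleftrightarrow> x \<preceq> \<sim>y"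
proof -
  have "x \<odot> y = \<zero> \<longleftrightarrow> \<sim>(x \<odot> y) = \<sim>\<zero>"
    using assms by (metis neg_neg odot_closed zero_closed)
  with assms show ?thesis
    by (simp add: neg_odot leq_def one_def)
qed

lemma imp_zero: "x \<in> carrier A \<Longrightarrow> x \<rightharpoonup> \<zero> = \<sim>x"
  by (simp add: imp_def)

definition meet :: "'a \<Rightarrow> 'a \<Rightarrow> 'a" where
  "meet x y = x \<odot> (x \<rightharpoonup> y)"

lemma meet_closed [simp]: "x \<in> carrier A \<Longrightarrow> y \<in> carrier A \<Longrightarrow> meet x y \<in> carrier A"
  by (simp add: meet_def)

lemma odot_oplus_neg:
  "x \<in> carrier A \<Longrightarrow> y \<in> carrier A \<Longrightarrow> x \<odot> y \<oplus> \<sim>x = \<sim>(x \<oplus> y) \<oplus> y"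
  unfolding odot_def using join_commute[of y "\<sim>x"] by (simp add: oplus_commute)

lemma meet_commute: "x \<in> carrier A \<Longrightarrow> y \<in> carrier A \<Longrightarrow> meet x y = meet y x"
  unfolding meet_def odot_def imp_def using join_commute[of "\<sim>x" "\<sim>y"] by (simp add: oplus_commute)

lemma neg_oplus_meet:
  assumes "x \<in> carrier A" "y \<in> carrier A"
  shows "\<sim>y \<oplus> meet y x = \<sim>y \<oplus> x"
proof -
  have "y \<odot> (\<sim>y \<oplus> x) \<oplus> \<sim>y = \<sim>y \<oplus> x"
    using assms odot_oplus_neg[of y "\<sim>y \<oplus> x"] by simp
  with assms show ?thesis
    unfolding meet_def imp_def by (simp add: oplus_commute[of "\<sim>y"])
qed

lemma meet_leq_left: "x \<in> carrier A \<Longrightarrow> y \<in> carrier A \<Longrightarrow> meet x y \<preceq> x"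
  unfolding meet_def imp_def leq_def by (simp add: neg_odot oplus_ac)

lemma meet_leq_right: "x \<in> carrier A \<Longrightarrow> y \<in> carrier A \<Longrightarrow> meet x y \<preceq> y"
  using meet_commute meet_leq_left by metis

lemma modus_ponens: "x \<in> carrier A \<Longrightarrow> y \<in> carrier A \<Longrightarrow> x \<odot> (x \<rightharpoonup> y) \<preceq> y"
  using meet_leq_right by (simp add: meet_def)

lemma neg_imp_oplus_meet:
  assumes "x \<in> carrier A" "y \<in> carrier A"
  shows "\<sim>(x \<rightharpoonup> y) \<oplus> meet x y = x"
proof -
  have "\<sim>(x \<rightharpoonup> meet x y) \<oplus> meet x y = \<sim>(meet x y \<rightharpoonup> x) \<oplus> x"
    using assms join_commute[of x "meet x y"] by (simp add: imp_def)
  also have "\<dots> = x"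
    using assms meet_leq_left by (simp add: leq_def imp_def)
  finally show ?thesis
    using assms neg_oplus_meet[of y x] by (simp add: imp_def)
qed

text \<open>The elements \<open>\<sim>(x \<rightharpoonup> y)\<close> and \<open>\<sim>(y \<rightharpoonup> x)\<close> are orthogonal, in the absorption form
  \<open>p \<oplus> c = c\<close> (which means \<open>meet p (\<sim>c) = \<zero>\<close>).\<close>
lemma neg_imp_oplus_imp:
  assumes "x \<in> carrier A" "y \<in> carrier A"
  shows "\<sim>(x \<rightharpoonup> y) \<oplus> (y \<rightharpoonup> x) = y \<rightharpoonup> x"
proof -
  have "\<sim>(x \<rightharpoonup> y) \<oplus> (y \<rightharpoonup> x) = \<sim>(x \<rightharpoonup> y) \<oplus> (\<sim>y \<oplus> meet x y)"
    using assms neg_oplus_meet[of x y] meet_commute[of x y] by (simp add: imp_def)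
  also have "\<dots> = \<sim>y \<oplus> (\<sim>(x \<rightharpoonup> y) \<oplus> meet x y)"
    using assms by (simp add: oplus_left_commute)
  also have "\<dots> = y \<rightharpoonup> x"
    using assms neg_imp_oplus_meet[OF assms] by (simp add: imp_def)
  finally show ?thesis .
qed

lemma oplus_absorb_neg:
  assumes "p \<in> carrier A" "c \<in> carrier A" "p \<oplus> c = c"
  shows "\<sim>p \<oplus> \<sim>c = \<sim>p"
proof -
  have "meet (\<sim>c) p = \<zero>"
    using assms by (simp add: meet_def odot_def imp_def oplus_commute[of c p])
  then have "(\<sim>p \<oplus> \<sim>c) \<odot> p = \<zero>"
    using assms meet_commute[of p "\<sim>c"] by (simp add: meet_def imp_def odot_commute)
  then have "\<sim>p \<oplus> \<sim>c \<preceq> \<sim>p"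
    using assms odot_eq_zero_iff by simp
  with assms show ?thesis
    by (simp add: leq_antisym)
qed

lemma odot_oplus_leq:
  assumes "x \<in> carrier A" "y \<in> carrier A" "w \<in> carrier A"
  shows "x \<odot> (y \<oplus> w) \<preceq> x \<odot> y \<oplus> w"
proof -
  have "\<sim>(x \<odot> (y \<oplus> w)) \<oplus> (x \<odot> y \<oplus> w) = (x \<odot> y \<oplus> \<sim>x) \<oplus> (\<sim>(y \<oplus> w) \<oplus> w)"
    using assms by (simp add: neg_odot oplus_ac)
  also have "\<dots> = (\<sim>(x \<oplus> y) \<oplus> y) \<oplus> (\<sim>(y \<oplus> w) \<oplus> w)"
    using assms by (simp add: odot_oplus_neg)
  also have "\<dots> = \<sim>(x \<oplus> y) \<oplus> (y \<oplus> (\<sim>(y \<oplus> w) \<oplus> w))"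
    using assms by (simp add: oplus_assoc)
  also have "\<dots> = \<one>"
    using assms oplus_left_commute[of y "\<sim>(y \<oplus> w)" w] by simp
  finally show ?thesis
    by (simp add: leq_def)
qed

lemma imp_trans:
  assumes "a \<in> carrier A" "b \<in> carrier A" "d \<in> carrier A"
  shows "(a \<rightharpoonup> b) \<odot> (b \<rightharpoonup> d) \<preceq> a \<rightharpoonup> d"
proof -
  have "(a \<rightharpoonup> b) \<odot> (b \<rightharpoonup> d) \<odot> a = a \<odot> (a \<rightharpoonup> b) \<odot> (b \<rightharpoonup> d)"
    using assms by (simp add: odot_ac)
  moreover have "a \<odot> (a \<rightharpoonup> b) \<odot> (b \<rightharpoonup> d) \<preceq> b \<odot> (b \<rightharpoonup> d)"
    using assms modus_ponens[of a b] by (simp add: odot_mono_left)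
  moreover have "b \<odot> (b \<rightharpoonup> d) \<preceq> d"
    using assms by (simp add: modus_ponens)
  ultimately have "(a \<rightharpoonup> b) \<odot> (b \<rightharpoonup> d) \<odot> a \<preceq> d"
    using assms leq_trans[of _ "b \<odot> (b \<rightharpoonup> d)" d] by simp
  with assms show ?thesis
    by (simp add: residuation)
qed

lemma imp_odot_oplus_leq:
  assumes "a \<in> carrier A" "b \<in> carrier A" "c \<in> carrier A"
  shows "(a \<rightharpoonup> b) \<odot> (a \<oplus> c) \<preceq> b \<oplus> c"
proof -
  have "(a \<rightharpoonup> b) \<odot> (a \<oplus> c) \<preceq> (a \<rightharpoonup> b) \<odot> a \<oplus> c"
    using assms by (simp add: odot_oplus_leq)
  moreover have "(a \<rightharpoonup> b) \<odot> a \<oplus> c \<preceq> b \<oplus> c"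
    using assms modus_ponens[of a b] by (simp add: oplus_mono_left odot_commute)
  ultimately show ?thesis
    using assms leq_trans[of _ "(a \<rightharpoonup> b) \<odot> a \<oplus> c"] by simp
qed

lemma imp_odot_imp_leq_oplus:
  assumes "a \<in> carrier A" "b \<in> carrier A" "c \<in> carrier A" "d \<in> carrier A"
  shows "(a \<rightharpoonup> b) \<odot> (c \<rightharpoonup> d) \<preceq> a \<oplus> c \<rightharpoonup> b \<oplus> d"
proof -
  have "(a \<rightharpoonup> b) \<odot> (c \<rightharpoonup> d) \<odot> (a \<oplus> c) = (c \<rightharpoonup> d) \<odot> ((a \<rightharpoonup> b) \<odot> (a \<oplus> c))"
    using assms by (simp add: odot_ac)
  moreover have "(c \<rightharpoonup> d) \<odot> ((a \<rightharpoonup> b) \<odot> (a \<oplus> c)) \<preceq> (c \<rightharpoonup> d) \<odot> (c \<oplus> b)"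
    using assms imp_odot_oplus_leq[of a b c] by (simp add: odot_mono oplus_commute[of b])
  moreover have "(c \<rightharpoonup> d) \<odot> (c \<oplus> b) \<preceq> b \<oplus> d"
    using assms imp_odot_oplus_leq[of c d b] by (simp add: oplus_commute[of d])
  ultimately have "(a \<rightharpoonup> b) \<odot> (c \<rightharpoonup> d) \<odot> (a \<oplus> c) \<preceq> b \<oplus> d"
    using assms leq_trans[of _ "(c \<rightharpoonup> d) \<odot> (c \<oplus> b)"] by simp
  with assms show ?thesis
    by (simp add: residuation)
qed

lemma imp_odot_imp_leq_odot:
  assumes "a \<in> carrier A" "b \<in> carrier A" "c \<in> carrier A" "d \<in> carrier A"
  shows "(a \<rightharpoonup> b) \<odot> (c \<rightharpoonup> d) \<preceq> a \<odot> c \<rightharpoonup> b \<odot> d"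
proof -
  have "(a \<rightharpoonup> b) \<odot> (c \<rightharpoonup> d) \<odot> (a \<odot> c) = a \<odot> (a \<rightharpoonup> b) \<odot> (c \<odot> (c \<rightharpoonup> d))"
    using assms by (simp add: odot_ac)
  also have "\<dots> \<preceq> b \<odot> d"
    using assms by (simp add: odot_mono modus_ponens)
  finally show ?thesis
    using assms by (simp add: residuation)
qed

primrec odot_pow :: "'a \<Rightarrow> nat \<Rightarrow> 'a" where
  "odot_pow x 0 = \<one>"
| "odot_pow x (Suc n) = x \<odot> odot_pow x n"

lemma odot_pow_closed [simp]: "x \<in> carrier A \<Longrightarrow> odot_pow x n \<in> carrier A"
  by (induction n) auto

lemma odot_pow_add: "x \<in> carrier A \<Longrightarrow> odot_pow x (n + m) = odot_pow x n \<odot> odot_pow x m"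
  by (induction n) (auto simp: odot_assoc)

lemma odot_pow_imp_leq:
  assumes "a \<in> carrier A" "b \<in> carrier A"
  shows "odot_pow (a \<rightharpoonup> b) n \<preceq> odot_pow a n \<rightharpoonup> odot_pow b n"
proof (induction n)
  case 0
  then show ?case
    by (simp add: imp_def)
next
  case (Suc n)
  have "(a \<rightharpoonup> b) \<odot> odot_pow (a \<rightharpoonup> b) n \<preceq> (a \<rightharpoonup> b) \<odot> (odot_pow a n \<rightharpoonup> odot_pow b n)"
    using assms Suc odot_mono[of "a \<rightharpoonup> b" "a \<rightharpoonup> b"] by simp
  moreover have "(a \<rightharpoonup> b) \<odot> (odot_pow a n \<rightharpoonup> odot_pow b n) \<preceq> odot_pow a (Suc n) \<rightharpoonup> odot_pow b (Suc n)"
    using assms by (simp add: imp_odot_imp_leq_odot)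
  ultimately show ?case
    using assms leq_trans[of _ "(a \<rightharpoonup> b) \<odot> (odot_pow a n \<rightharpoonup> odot_pow b n)"] by simp
qed

lemma neg_odot_pow_absorb:
  assumes "a \<in> carrier A" "c \<in> carrier A" "\<sim>a \<oplus> c = c"
  shows "\<sim>odot_pow a n \<oplus> c = c"
proof (induction n)
  case (Suc n)
  with assms have "\<sim>odot_pow a (Suc n) \<oplus> c = \<sim>odot_pow a n \<oplus> (\<sim>a \<oplus> c)"
    by (simp add: neg_odot oplus_assoc oplus_left_commute[of "\<sim>a"])
  with assms Suc show ?case
    by simp
qed (simp add: assms)

text \<open>Prelinearity, in the form needed for maximal filters: the orthogonality of
  \<open>\<sim>(x \<rightharpoonup> y)\<close> and \<open>\<sim>(y \<rightharpoonup> x)\<close> survives taking powers.\<close>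
lemma odot_neg_pow_imp_eq_zero:
  assumes "x \<in> carrier A" "y \<in> carrier A"
  shows "\<sim>odot_pow (x \<rightharpoonup> y) n \<odot> \<sim>odot_pow (y \<rightharpoonup> x) m = \<zero>"
proof -
  define a b where "a = x \<rightharpoonup> y" and "b = y \<rightharpoonup> x"
  have ab: "a \<in> carrier A" "b \<in> carrier A"
    using assms by (auto simp: a_def b_def)
  have "\<sim>odot_pow a n \<oplus> b = b"
    using assms ab neg_imp_oplus_imp neg_odot_pow_absorb unfolding a_def b_def by simp
  then have "\<sim>b \<oplus> odot_pow a n = odot_pow a n"
    using ab oplus_absorb_neg[of "\<sim>odot_pow a n" b] by (simp add: oplus_commute)
  then have "\<sim>odot_pow b m \<oplus> odot_pow a n = odot_pow a n"
    using ab neg_odot_pow_absorb by simp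
  then have "odot_pow b m \<oplus> \<sim>odot_pow a n = odot_pow b m"
    using ab oplus_absorb_neg[of "\<sim>odot_pow b m" "odot_pow a n"] by simp
  then have "\<sim>odot_pow a n \<preceq> odot_pow b m"
    using ab leq_oplus_left[of "\<sim>odot_pow a n" "odot_pow b m"] by simp
  then show ?thesis
    using ab by (simp add: odot_eq_zero_iff a_def b_def)
qed

lemma mv_filter_generated:
  assumes F: "mv_filter A F" and a: "a \<in> carrier A"
  shows "mv_filter A {y \<in> carrier A. \<exists>f\<in>F. \<exists>n. f \<odot> odot_pow a n \<preceq> y}"
    (is "mv_filter A ?G")
proof -
  have F_carrier: "F \<subseteq> carrier A" and one_F: "\<one> \<in> F" and F_odot: "\<forall>x\<in>F. \<forall>y\<in>F. x \<odot> y \<in> F"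
    using F by (auto simp: mv_filter_def)
  have "\<one> \<odot> odot_pow a 0 \<preceq> \<one>"
    by simp
  with one_F one_closed have "\<one> \<in> ?G"
    by blast
  moreover have "y \<in> ?G" if x: "x \<in> ?G" and y: "y \<in> carrier A" "x \<preceq> y" for x y
  proof -
    obtain f n where f: "f \<in> F" "f \<odot> odot_pow a n \<preceq> x" and "x \<in> carrier A"
      using x by blast
    moreover have "f \<in> carrier A"
      using f F_carrier by blast
    ultimately have "f \<odot> odot_pow a n \<preceq> y"
      using a y leq_trans[of "f \<odot> odot_pow a n" x y] by simp
    with f y show ?thesis
      by blast
  qed
  moreover have "x \<odot> y \<in> ?G" if x: "x \<in> ?G" and y: "y \<in> ?G" for x y
  proof -
    obtain f n g m where fg: "f \<in> F" "f \<odot> odot_pow a n \<preceq> x" "g \<in> F" "g \<odot> odot_pow a m \<preceq> y"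
      and xy: "x \<in> carrier A" "y \<in> carrier A"
      using x y by blast
    then have f_g: "f \<in> carrier A" "g \<in> carrier A"
      using F_carrier by auto
    have "f \<odot> g \<odot> odot_pow a (n + m) = f \<odot> odot_pow a n \<odot> (g \<odot> odot_pow a m)"
      using a f_g by (simp add: odot_pow_add odot_ac)
    also have "\<dots> \<preceq> x \<odot> y"
      using a f_g xy fg by (simp add: odot_mono)
    finally have "f \<odot> g \<odot> odot_pow a (n + m) \<preceq> x \<odot> y" .
    moreover have "f \<odot> g \<in> F"
      using fg F_odot by blast
    ultimately show ?thesis
      using xy by auto
  qed
  ultimately show ?thesis
    unfolding mv_filter_def by blast
qed

end

section \<open>Maximal filters\<close>

locale mv_maximal_filter = mv_algebra +
  fixes F :: "'a set"
  assumes maximal: "maximal_filter A F"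
begin

lemma filter: "mv_filter A F"
  using maximal by (simp add: maximal_filter_def)

lemma filter_subset: "F \<subseteq> carrier A"
  using filter by (simp add: mv_filter_def)

lemma one_in_filter [simp]: "\<one> \<in> F"
  using filter by (simp add: mv_filter_def)

lemma filter_leq: "x \<in> F \<Longrightarrow> y \<in> carrier A \<Longrightarrow> x \<preceq> y \<Longrightarrow> y \<in> F"
  using filter unfolding mv_filter_def by blast

lemma filter_odot: "x \<in> F \<Longrightarrow> y \<in> F \<Longrightarrow> x \<odot> y \<in> F"
  using filter unfolding mv_filter_def by blast

lemma odot_pow_in_filter: "x \<in> F \<Longrightarrow> odot_pow x n \<in> F"
  by (induction n) (simp_all add: filter_odot)

lemma zero_notin_filter: "\<zero> \<notin> F"
proof
  assume "\<zero> \<in> F"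
  then have "carrier A \<subseteq> F"
    using filter_leq[of \<zero>] by auto
  with filter_subset maximal show False
    by (simp add: maximal_filter_def)
qed

text \<open>Every element of the simple quotient by \<open>F\<close> other than \<open>\<one>\<close> is nilpotent.\<close>
lemma neg_odot_pow_in_filter:
  assumes a: "a \<in> carrier A" "a \<notin> F"
  obtains n where "\<sim>odot_pow a n \<in> F"
proof -
  define G where "G = {y \<in> carrier A. \<exists>f\<in>F. \<exists>n. f \<odot> odot_pow a n \<preceq> y}"
  have G_filter: "mv_filter A G"
    unfolding G_def using filter a(1) by (rule mv_filter_generated)
  have "f \<in> G" if "f \<in> F" for f
    using that filter_subset unfolding G_def by (force intro: exI[of _ 0])
  moreover have "\<one> \<odot> odot_pow a 1 \<preceq> a"
    using a by simp
  then have "a \<in> G"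
    using a one_in_filter unfolding G_def by blast
  ultimately have "G = carrier A"
    using maximal G_filter a unfolding maximal_filter_def by blast
  then obtain f n where f: "f \<in> F" "f \<odot> odot_pow a n \<preceq> \<zero>"
    unfolding G_def using zero_closed by blast
  with a filter_subset have "f \<preceq> \<sim>odot_pow a n"
    by (auto simp: leq_zero_iff odot_eq_zero_iff)
  with a f have "\<sim>odot_pow a n \<in> F"
    by (simp add: filter_leq)
  then show thesis
    by (rule that)
qed

lemma imp_in_filter_linear:
  assumes "x \<in> carrier A" "y \<in> carrier A"
  shows "x \<rightharpoonup> y \<in> F \<or> y \<rightharpoonup> x \<in> F"
proof (rule ccontr)
  assume "\<not> ?thesis"
  then have notin: "x \<rightharpoonup> y \<notin> F" "y \<rightharpoonup> x \<notin> F"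
    by simp_all
  have closed: "x \<rightharpoonup> y \<in> carrier A" "y \<rightharpoonup> x \<in> carrier A"
    using assms by simp_all
  obtain n where "\<sim>odot_pow (x \<rightharpoonup> y) n \<in> F"
    by (rule neg_odot_pow_in_filter[OF closed(1) notin(1)])
  moreover obtain m where "\<sim>odot_pow (y \<rightharpoonup> x) m \<in> F"
    by (rule neg_odot_pow_in_filter[OF closed(2) notin(2)])
  ultimately have "\<sim>odot_pow (x \<rightharpoonup> y) n \<odot> \<sim>odot_pow (y \<rightharpoonup> x) m \<in> F"
    by (rule filter_odot)
  with zero_notin_filter show False
    by (simp add: odot_neg_pow_imp_eq_zero[OF assms])
qed

end

section \<open>Pavelka algebras\<close>

locale pavelka_algebra = mv_algebra +
  assumes pavelka: "is_pavelka A"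
begin

lemma cst_closed [simp]: "0 \<le> r \<Longrightarrow> r \<le> 1 \<Longrightarrow> cst A r \<in> carrier A"
  using pavelka unfolding is_pavelka_def by blast

lemma cst_oplus:
  "0 \<le> r \<Longrightarrow> r \<le> 1 \<Longrightarrow> 0 \<le> s \<Longrightarrow> s \<le> 1 \<Longrightarrow> cst A r \<oplus> cst A s = cst A (min (r + s) 1)"
  using pavelka unfolding is_pavelka_def by blast

lemma cst_neg: "0 \<le> r \<Longrightarrow> r \<le> 1 \<Longrightarrow> \<sim>cst A r = cst A (1 - r)"
  using pavelka unfolding is_pavelka_def by blast

lemma one_eq_cst: "\<one> = cst A 1"
  using cst_neg[of 0] by (simp add: one_def)

lemma cst_odot:
  assumes "0 \<le> r" "r \<le> 1" "0 \<le> s" "s \<le> 1"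
  shows "cst A r \<odot> cst A s = cst A (max 0 (r + s - 1))"
proof -
  have "cst A r \<odot> cst A s = cst A (1 - min (1 - r + (1 - s)) 1)"
    using assms by (simp add: odot_def cst_neg cst_oplus)
  also have "1 - min (1 - r + (1 - s)) 1 = max 0 (r + s - 1)"
    by (simp add: min_def max_def)
  finally show ?thesis .
qed

lemma cst_imp:
  "0 \<le> r \<Longrightarrow> r \<le> 1 \<Longrightarrow> 0 \<le> s \<Longrightarrow> s \<le> 1 \<Longrightarrow> cst A r \<rightharpoonup> cst A s = cst A (min (1 - r + s) 1)"
  by (simp add: imp_def cst_neg cst_oplus)

lemma cst_leq: "0 \<le> r \<Longrightarrow> r \<le> s \<Longrightarrow> s \<le> 1 \<Longrightarrow> cst A r \<preceq> cst A s"
  using cst_imp[of r s] by (simp add: leq_def imp_def one_eq_cst)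

lemma cst_odot_pow:
  assumes "0 \<le> r" "r \<le> 1"
  shows "odot_pow (cst A r) n = cst A (max 0 (1 - of_nat n * (1 - r)))"
proof (induction n)
  case 0
  then show ?case
    by (simp add: one_eq_cst)
next
  case (Suc n)
  define t where "t = max 0 (1 - of_nat n * (1 - r))"
  have "0 \<le> t" "t \<le> 1"
    using assms by (auto simp: t_def)
  with assms Suc have "odot_pow (cst A r) (Suc n) = cst A (max 0 (r + t - 1))"
    by (simp add: cst_odot t_def)
  also have "max 0 (r + t - 1) = max 0 (1 - of_nat (Suc n) * (1 - r))"
    using assms by (auto simp: t_def max_def algebra_simps)
  finally show ?case .
qed

lemma std_hom_range: "std_hom A g \<Longrightarrow> x \<in> carrier A \<Longrightarrow> g x \<in> {0..1}"
  unfolding std_hom_def by simp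

lemma std_hom_oplus: "std_hom A g \<Longrightarrow> x \<in> carrier A \<Longrightarrow> y \<in> carrier A \<Longrightarrow> g (x \<oplus> y) = min (g x + g y) 1"
  unfolding std_hom_def by blast

lemma std_hom_neg: "std_hom A g \<Longrightarrow> x \<in> carrier A \<Longrightarrow> g (\<sim>x) = 1 - g x"
  unfolding std_hom_def by blast

lemma std_hom_cst: "std_hom A g \<Longrightarrow> 0 \<le> r \<Longrightarrow> r \<le> 1 \<Longrightarrow> g (cst A r) = of_rat r"
  unfolding std_hom_def by blast

lemma std_hom_imp:
  "std_hom A g \<Longrightarrow> x \<in> carrier A \<Longrightarrow> y \<in> carrier A \<Longrightarrow> g (x \<rightharpoonup> y) = r_imp (g x) (g y)"
  by (simp add: imp_def std_hom_oplus std_hom_neg r_imp_def min.commute)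

lemma std_hom_odot:
  "std_hom A g \<Longrightarrow> x \<in> carrier A \<Longrightarrow> y \<in> carrier A \<Longrightarrow> g (x \<odot> y) = r_times (g x) (g y)"
  by (simp add: odot_def std_hom_oplus std_hom_neg r_times_def min_def max_def)

lemma std_hom_imp_eq_one_iff:
  "std_hom A g \<Longrightarrow> x \<in> carrier A \<Longrightarrow> y \<in> carrier A \<Longrightarrow> g (x \<rightharpoonup> y) = 1 \<longleftrightarrow> g x \<le> g y"
  by (simp add: std_hom_imp r_imp_def min_def)

lemma std_hom_mono: "std_hom A g \<Longrightarrow> x \<in> carrier A \<Longrightarrow> y \<in> carrier A \<Longrightarrow> x \<preceq> y \<Longrightarrow> g x \<le> g y"
  using std_hom_imp_eq_one_iff[of g x y] std_hom_cst[of g 1]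
  by (simp add: leq_def imp_def one_eq_cst)

lemma std_hom_odot_pow:
  assumes "std_hom A g" "x \<in> carrier A"
  shows "g (odot_pow x n) = max 0 (1 - of_nat n * (1 - g x))"
proof (induction n)
  case 0
  with assms show ?case
    using std_hom_cst[of g 1] by (simp add: one_eq_cst)
next
  case (Suc n)
  with assms std_hom_range[of g x] show ?case
    by (auto simp: std_hom_odot r_times_def max_def algebra_simps)
qed

text \<open>A homomorphism into \<open>[0,1]\<close> is determined by its kernel, since \<open>cst A r \<rightharpoonup> x\<close> lies in
  the kernel of \<open>g\<close> exactly when \<open>r \<le> g x\<close>.\<close>
lemma std_hom_unique:
  assumes g: "std_hom A g" and g': "std_hom A g'"
    and kernel: "{y \<in> carrier A. g y = 1} = {y \<in> carrier A. g' y = 1}" and x: "x \<in> carrier A"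
  shows "g x = g' x"
proof -
  have cut: "of_rat r \<le> g x \<longleftrightarrow> of_rat r \<le> g' x" if r: "0 \<le> r" "r \<le> 1" for r
  proof -
    have "cst A r \<rightharpoonup> x \<in> carrier A"
      using r x by simp
    then have "g (cst A r \<rightharpoonup> x) = 1 \<longleftrightarrow> g' (cst A r \<rightharpoonup> x) = 1"
      using kernel unfolding set_eq_iff by blast
    with r x show ?thesis
      by (simp add: std_hom_imp_eq_one_iff[OF g] std_hom_imp_eq_one_iff[OF g']
          std_hom_cst[OF g] std_hom_cst[OF g'])
  qed
  show ?thesis
  proof (rule real_eq_by_rat_cuts)
    show "g x \<in> {0..1}" "g' x \<in> {0..1}"
      using std_hom_range[OF g x] std_hom_range[OF g' x] by auto
    show "of_rat r \<le> g' x" if "0 \<le> r" "r \<le> 1" "of_rat r < g x" for r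
      using cut[OF that(1,2)] that(3) by simp
    show "g' x \<le> of_rat r" if "0 \<le> r" "r \<le> 1" "g x < of_rat r" for r
      using cut[OF that(1,2)] that(3) by linarith
  qed
qed

end

locale pavelka_maximal_filter = pavelka_algebra + mv_maximal_filter
begin

lemma cst_in_filter_iff:
  assumes r: "0 \<le> r" "r \<le> 1"
  shows "cst A r \<in> F \<longleftrightarrow> r = 1"
proof
  assume F: "cst A r \<in> F"
  show "r = 1"
  proof (rule ccontr)
    assume "r \<noteq> 1"
    with r obtain n where n: "1 < of_nat n * (1 - r)"
      using ex_less_of_nat_mult[of "1 - r" 1] by auto
    have "odot_pow (cst A r) n \<in> F"
      using F by (rule odot_pow_in_filter)
    with r n show False
      using zero_notin_filter by (simp add: cst_odot_pow)
  qed
qed (simp add: one_eq_cst[symmetric])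

text \<open>\<open>lbound r x\<close> and \<open>ubound r x\<close> say that \<open>r \<le> x/F\<close> and \<open>x/F \<le> r\<close> in the quotient by \<open>F\<close>;
  the value \<open>x/F \<in> [0,1]\<close> is then the cut that the rational lower bounds define.\<close>
definition lbound :: "rat \<Rightarrow> 'a \<Rightarrow> bool" where
  "lbound r x \<longleftrightarrow> cst A r \<rightharpoonup> x \<in> F"

definition ubound :: "rat \<Rightarrow> 'a \<Rightarrow> bool" where
  "ubound r x \<longleftrightarrow> x \<rightharpoonup> cst A r \<in> F"

definition lower_cut :: "'a \<Rightarrow> real set" where
  "lower_cut x = {of_rat r | r. 0 \<le> r \<and> r \<le> 1 \<and> lbound r x}"

definition val :: "'a \<Rightarrow> real" where
  "val x = Sup (lower_cut x)"

lemma lbound_zero: "x \<in> carrier A \<Longrightarrow> lbound 0 x"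
  by (simp add: lbound_def imp_def one_def[symmetric])

lemma lbound_one: "x \<in> F \<Longrightarrow> lbound 1 x"
  using filter_subset by (auto simp: lbound_def imp_def one_eq_cst[symmetric])

lemma ubound_one: "x \<in> carrier A \<Longrightarrow> ubound 1 x"
  by (simp add: ubound_def imp_def one_eq_cst[symmetric])

lemma lbound_antimono:
  assumes "0 \<le> r" "r \<le> s" "s \<le> 1" "x \<in> carrier A" "lbound s x"
  shows "lbound r x"
proof -
  have "cst A s \<rightharpoonup> x \<preceq> cst A r \<rightharpoonup> x"
    using assms cst_leq[of r s] by (simp add: imp_def cst_neg[symmetric] neg_antimono oplus_mono_left)
  with assms show ?thesis
    by (auto simp: lbound_def intro: filter_leq)
qed

lemma lbound_ubound_le:
  assumes "0 \<le> r" "r \<le> 1" "0 \<le> s" "s \<le> 1" "x \<in> carrier A" "lbound r x" "ubound s x"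
  shows "r \<le> s"
proof -
  have "(cst A r \<rightharpoonup> x) \<odot> (x \<rightharpoonup> cst A s) \<in> F"
    using assms by (simp add: lbound_def ubound_def filter_odot)
  then have "cst A r \<rightharpoonup> cst A s \<in> F"
    using assms imp_trans[of "cst A r" x "cst A s"] by (simp add: filter_leq)
  with assms have "min (1 - r + s) 1 = 1"
    by (simp add: cst_imp cst_in_filter_iff)
  then show ?thesis
    by (simp add: min_def split: if_splits)
qed

lemma lbound_or_ubound: "x \<in> carrier A \<Longrightarrow> 0 \<le> r \<Longrightarrow> r \<le> 1 \<Longrightarrow> lbound r x \<or> ubound r x"
  using imp_in_filter_linear[of "cst A r" x] by (simp add: lbound_def ubound_def)

lemma lower_cut_nonempty: "x \<in> carrier A \<Longrightarrow> lower_cut x \<noteq> {}"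
  using lbound_zero by (force simp: lower_cut_def)

lemma bdd_above_lower_cut: "bdd_above (lower_cut x)"
  by (auto simp: bdd_above_def lower_cut_def intro!: exI[of _ "1::real"])

lemma val_ge: "x \<in> carrier A \<Longrightarrow> 0 \<le> r \<Longrightarrow> r \<le> 1 \<Longrightarrow> lbound r x \<Longrightarrow> of_rat r \<le> val x"
  unfolding val_def by (rule cSup_upper[OF _ bdd_above_lower_cut]) (auto simp: lower_cut_def)

lemma val_le:
  assumes "x \<in> carrier A" "0 \<le> r" "r \<le> 1" "ubound r x"
  shows "val x \<le> of_rat r"
  unfolding val_def
proof (rule cSup_least)
  show "lower_cut x \<noteq> {}"
    using assms(1) by (rule lower_cut_nonempty)
  show "y \<le> of_rat r" if "y \<in> lower_cut x" for y
  proof -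
    from that obtain s where "y = of_rat s" "0 \<le> s" "s \<le> 1" "lbound s x"
      by (auto simp: lower_cut_def)
    with assms show ?thesis
      using lbound_ubound_le[of s r x] by (simp add: of_rat_less_eq)
  qed
qed

lemma val_range: "x \<in> carrier A \<Longrightarrow> val x \<in> {0..1}"
  using val_ge[of x 0] val_le[of x 1] lbound_zero ubound_one by simp

lemma lbound_if_less_val:
  assumes x: "x \<in> carrier A" and r: "0 \<le> r" "r \<le> 1" "of_rat r < val x"
  shows "lbound r x"
proof -
  obtain y where "y \<in> lower_cut x" "of_rat r < y"
    using r less_cSup_iff[OF lower_cut_nonempty[OF x] bdd_above_lower_cut] by (auto simp: val_def)
  then obtain s where "of_rat r < (of_rat s :: real)" "s \<le> 1" "lbound s x"
    by (auto simp: lower_cut_def)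
  with x r show ?thesis
    using lbound_antimono[of r s x] by (simp add: of_rat_less)
qed

lemma ubound_if_greater_val:
  assumes "x \<in> carrier A" "0 \<le> r" "r \<le> 1" "val x < of_rat r"
  shows "ubound r x"
  using assms lbound_or_ubound[of x r] val_ge[of x r] by auto

lemma lbound_approx:
  assumes "x \<in> carrier A" "0 < e"
  obtains s where "0 \<le> s" "s \<le> 1" "lbound s x" "val x - e < of_rat s"
proof (cases "val x - e < 0")
  case True
  with assms that show ?thesis
    using lbound_zero by force
next
  case False
  then obtain s where s: "val x - e < of_rat s" "of_rat s < val x"
    using assms of_rat_dense[of "val x - e" "val x"] by auto
  moreover have "0 \<le> (of_rat s :: real)" "(of_rat s :: real) \<le> 1"
    using s False val_range[OF assms(1)] by (auto simp del: zero_le_of_rat_iff of_rat_le_1_iff)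
  then have "0 \<le> s" "s \<le> 1"
    by simp_all
  ultimately show ?thesis
    using assms that lbound_if_less_val by blast
qed

lemma lbound_neg_iff:
  assumes "x \<in> carrier A" "0 \<le> r" "r \<le> 1"
  shows "lbound r (\<sim>x) \<longleftrightarrow> ubound (1 - r) x"
  using assms by (simp add: lbound_def ubound_def imp_def cst_neg oplus_commute)

lemma val_neg:
  assumes x: "x \<in> carrier A"
  shows "val (\<sim>x) = 1 - val x"
proof (rule sym, rule real_eq_by_rat_cuts)
  show "1 - val x \<in> {0..1}" "val (\<sim>x) \<in> {0..1}"
    using x val_range by auto
  show "of_rat r \<le> val (\<sim>x)" if "0 \<le> r" "r \<le> 1" "of_rat r < 1 - val x" for r
  proof -
    have "ubound (1 - r) x"
      using x that by (intro ubound_if_greater_val) (auto simp: of_rat_diff)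
    with x that show ?thesis
      by (simp add: val_ge lbound_neg_iff)
  qed
  show "val (\<sim>x) \<le> of_rat r" if "0 \<le> r" "r \<le> 1" "1 - val x < of_rat r" for r
  proof -
    have "lbound (1 - r) x"
      using x that by (intro lbound_if_less_val) (auto simp: of_rat_diff)
    then have "ubound r (\<sim>x)"
      using x that lbound_neg_iff[of "\<sim>x" "1 - r"] by simp
    with x that show ?thesis
      by (simp add: val_le)
  qed
qed

lemma val_cst:
  assumes "0 \<le> r" "r \<le> 1"
  shows "val (cst A r) = of_rat r"
proof -
  have "lbound r (cst A r)" "ubound r (cst A r)"
    using assms by (simp_all add: lbound_def ubound_def imp_def)
  with assms show ?thesis
    using val_ge[of "cst A r" r] val_le[of "cst A r" r] by simp
qed

lemma lbound_oplus:
  assumes "x \<in> carrier A" "y \<in> carrier A" "0 \<le> s" "s \<le> 1" "0 \<le> t" "t \<le> 1"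
    and "lbound s x" "lbound t y"
  shows "lbound (min (s + t) 1) (x \<oplus> y)"
proof -
  have "(cst A s \<rightharpoonup> x) \<odot> (cst A t \<rightharpoonup> y) \<in> F"
    using assms by (simp add: lbound_def filter_odot)
  then have "cst A s \<oplus> cst A t \<rightharpoonup> x \<oplus> y \<in> F"
    using assms imp_odot_imp_leq_oplus[of "cst A s" x "cst A t" y] by (simp add: filter_leq)
  with assms show ?thesis
    by (simp add: lbound_def cst_oplus)
qed

lemma lbound_odot:
  assumes "x \<in> carrier A" "y \<in> carrier A" "0 \<le> s" "s \<le> 1" "0 \<le> t" "t \<le> 1"
    and "lbound s x" "lbound t y"
  shows "lbound (max 0 (s + t - 1)) (x \<odot> y)"
proof -
  have "(cst A s \<rightharpoonup> x) \<odot> (cst A t \<rightharpoonup> y) \<in> F"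
    using assms by (simp add: lbound_def filter_odot)
  then have "cst A s \<odot> cst A t \<rightharpoonup> x \<odot> y \<in> F"
    using assms imp_odot_imp_leq_odot[of "cst A s" x "cst A t" y] by (simp add: filter_leq)
  with assms show ?thesis
    by (simp add: lbound_def cst_odot)
qed

lemma val_oplus_ge:
  assumes x: "x \<in> carrier A" and y: "y \<in> carrier A"
  shows "min (val x + val y) 1 \<le> val (x \<oplus> y)"
proof (rule ccontr)
  assume "\<not> ?thesis"
  then have gap: "val (x \<oplus> y) < min (val x + val y) 1"
    by (rule not_le_imp_less)
  define e where "e = (min (val x + val y) 1 - val (x \<oplus> y)) / 2"
  have "0 < e"
    using gap by (simp add: e_def)
  then obtain s t where s: "0 \<le> s" "s \<le> 1" "lbound s x" "val x - e < of_rat s"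
    and t: "0 \<le> t" "t \<le> 1" "lbound t y" "val y - e < of_rat t"
    using x y lbound_approx by metis
  define a where "a = (of_rat s + of_rat t :: real)"
  have "min a 1 \<le> val (x \<oplus> y)"
    using x y s t val_ge[of "x \<oplus> y" "min (s + t) 1"] by (simp add: a_def lbound_oplus of_rat_min of_rat_add)
  moreover have "val x + val y - 2 * e < a"
    using s t by (simp add: a_def)
  ultimately show False
    using gap unfolding e_def by argo
qed

lemma val_odot_ge:
  assumes x: "x \<in> carrier A" and y: "y \<in> carrier A"
  shows "max 0 (val x + val y - 1) \<le> val (x \<odot> y)"
proof (rule ccontr)
  assume "\<not> ?thesis"
  then have gap: "val (x \<odot> y) < max 0 (val x + val y - 1)"
    by (rule not_le_imp_less)
  define e where "e = (max 0 (val x + val y - 1) - val (x \<odot> y)) / 2"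
  have "0 < e"
    using gap by (simp add: e_def)
  then obtain s t where s: "0 \<le> s" "s \<le> 1" "lbound s x" "val x - e < of_rat s"
    and t: "0 \<le> t" "t \<le> 1" "lbound t y" "val y - e < of_rat t"
    using x y lbound_approx by metis
  define a where "a = (of_rat s + of_rat t :: real)"
  have "max 0 (a - 1) \<le> val (x \<odot> y)"
    using x y s t val_ge[of "x \<odot> y" "max 0 (s + t - 1)"]
    by (simp add: a_def lbound_odot of_rat_max of_rat_add of_rat_diff)
  moreover have "val x + val y - 2 * e < a"
    using s t by (simp add: a_def)
  moreover have "0 \<le> val (x \<odot> y)"
    using x y val_range[of "x \<odot> y"] by simp
  ultimately show False
    using gap unfolding e_def by argo
qed

text \<open>The upper bound for \<open>\<oplus>\<close> is the lower bound for \<open>\<odot>\<close>, transported by \<open>\<sim>\<close>.\<close>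
lemma val_oplus:
  assumes x: "x \<in> carrier A" and y: "y \<in> carrier A"
  shows "val (x \<oplus> y) = min (val x + val y) 1"
proof -
  have "x \<oplus> y = \<sim>(\<sim>x \<odot> \<sim>y)"
    using x y by (simp add: odot_def)
  then have "val (x \<oplus> y) = 1 - val (\<sim>x \<odot> \<sim>y)"
    using x y by (simp add: val_neg)
  also have "\<dots> \<le> 1 - max 0 (val (\<sim>x) + val (\<sim>y) - 1)"
    using x y val_odot_ge[of "\<sim>x" "\<sim>y"] by simp
  also have "\<dots> = min (val x + val y) 1"
    using x y by (simp add: val_neg min_def max_def)
  finally show ?thesis
    using x y val_oplus_ge by (simp add: antisym)
qed

text \<open>If \<open>x \<notin> F\<close> then \<open>\<sim>x\<^sup>n \<in> F\<close> for some \<open>n\<close>, whereas \<open>val x = 1\<close> would give \<open>r \<le> x/F\<close> for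
  \<open>r = 1 - 1/(2n)\<close>, hence \<open>1/2 = r\<^sup>n \<le> x\<^sup>n/F = 0\<close>.\<close>
lemma val_eq_one_iff:
  assumes x: "x \<in> carrier A"
  shows "val x = 1 \<longleftrightarrow> x \<in> F"
proof
  assume "x \<in> F"
  with x show "val x = 1"
    using val_ge[of x 1] val_range[OF x] by (simp add: lbound_one)
next
  assume val: "val x = 1"
  show "x \<in> F"
  proof (rule ccontr)
    assume "x \<notin> F"
    with x obtain n where n: "\<sim>odot_pow x n \<in> F"
      by (rule neg_odot_pow_in_filter)
    then have "n \<noteq> 0"
      using zero_notin_filter by (cases n) auto
    define r where "r = 1 - 1 / (2 * of_nat n :: rat)"
    have r: "0 \<le> r" "r < 1"
      using \<open>n \<noteq> 0\<close> by (auto simp: r_def field_simps)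
    with x val have "lbound r x"
      by (intro lbound_if_less_val) (simp_all add: of_rat_less[of r 1, simplified])
    then have "odot_pow (cst A r \<rightharpoonup> x) n \<in> F"
      by (simp add: lbound_def odot_pow_in_filter)
    then have "odot_pow (cst A r) n \<rightharpoonup> odot_pow x n \<in> F"
      using x r odot_pow_imp_leq[of "cst A r" x n] by (simp add: filter_leq)
    with n have "(odot_pow (cst A r) n \<rightharpoonup> odot_pow x n) \<odot> (odot_pow x n \<rightharpoonup> \<zero>) \<in> F"
      using x by (simp add: imp_zero filter_odot)
    then have "odot_pow (cst A r) n \<rightharpoonup> \<zero> \<in> F"
      using x r imp_trans[of "odot_pow (cst A r) n" "odot_pow x n" \<zero>] by (simp add: filter_leq)
    moreover have "max 0 (1 - of_nat n * (1 - r)) = 1 / 2"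
      using \<open>n \<noteq> 0\<close> by (simp add: r_def)
    ultimately have "cst A (1 / 2) \<in> F"
      using r by (simp add: imp_zero cst_odot_pow cst_neg)
    then show False
      by (simp add: cst_in_filter_iff)
  qed
qed

lemma std_hom_val: "std_hom A val"
  unfolding std_hom_def using val_range val_oplus val_neg val_cst by simp

lemma quot_val_eq_val:
  assumes x: "x \<in> carrier A"
  shows "quot_val A F x = val x"
  unfolding quot_val_def
proof (rule the_equality)
  have kernel: "{y \<in> carrier A. val y = 1} = F"
    using val_eq_one_iff filter_subset by auto
  then show "\<exists>h. std_hom A h \<and> {y \<in> carrier A. h y = 1} = F \<and> val x = h x"
    using std_hom_val by blast
  show "v = val x" if "\<exists>h. std_hom A h \<and> {y \<in> carrier A. h y = 1} = F \<and> v = h x" for v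
    using that kernel std_hom_unique[OF _ std_hom_val _ x] by auto
qed

end

lemma (in pavelka_algebra) inf01_r_imp_boolean:
  fixes \<phi> \<psi> :: "'a \<Rightarrow> real"
  assumes \<psi>: "std_hom A \<psi>"
    and \<phi>_range: "\<And>a. a \<in> carrier A \<Longrightarrow> \<phi> a \<in> {0..1}"
    and \<phi>_imp: "\<And>r a. 0 \<le> r \<Longrightarrow> r \<le> 1 \<Longrightarrow> a \<in> carrier A \<Longrightarrow> \<phi> (cst A r \<rightharpoonup> a) = r_imp (of_rat r) (\<phi> a)"
    and \<phi>_odot: "\<And>a b. a \<in> carrier A \<Longrightarrow> b \<in> carrier A \<Longrightarrow> r_times (\<phi> a) (\<phi> b) \<le> \<phi> (a \<odot> b)"
  shows "inf01 ((\<lambda>a. r_imp (\<phi> a) (\<psi> a)) ` carrier A) \<in> {0, 1}"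
proof (cases "\<forall>a \<in> carrier A. \<phi> a \<le> \<psi> a")
  case True
  then have "(\<lambda>a. r_imp (\<phi> a) (\<psi> a)) ` carrier A = (\<lambda>a. 1) ` carrier A"
    by (intro image_cong) (simp_all add: r_imp_def)
  also have "\<dots> = {1}"
    using one_closed by (rule image_constant)
  finally have "(\<lambda>a. r_imp (\<phi> a) (\<psi> a)) ` carrier A = {1}" .
  then show ?thesis
    by (simp add: inf01_def)
next
  case False
  then obtain a where a: "a \<in> carrier A" "\<psi> a < \<phi> a"
    by force
  then obtain q where q: "\<psi> a < of_rat q" "of_rat q < \<phi> a"
    using of_rat_dense by blast
  have "0 \<le> \<psi> a" "\<phi> a \<le> 1"
    using a \<phi>_range std_hom_range[OF \<psi>] by auto
  with q have "0 \<le> (of_rat q :: real)" "(of_rat q :: real) \<le> 1"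
    by linarith+
  then have q01: "0 \<le> q" "q \<le> 1"
    by simp_all
  define b where "b = cst A q \<rightharpoonup> a"
  have b: "b \<in> carrier A"
    using a q01 by (simp add: b_def)
  have "\<phi> b = 1"
    using a q q01 by (simp add: b_def \<phi>_imp r_imp_def)
  then have \<phi>_pow: "\<phi> (odot_pow b n) = 1" for n
  proof (induction n)
    case 0
    have "\<one> = cst A 0 \<rightharpoonup> a"
      using a by (simp add: imp_def one_def[symmetric])
    with a \<phi>_range[OF a(1)] show ?case
      by (simp add: \<phi>_imp r_imp_def)
  next
    case (Suc n)
    then have "1 \<le> \<phi> (odot_pow b (Suc n))"
      using b \<phi>_odot[of b "odot_pow b n"] by (simp add: r_times_def)
    with b \<phi>_range[of "odot_pow b (Suc n)"] show ?case
      by simp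
  qed
  have \<psi>_b: "\<psi> b = 1 - (of_rat q - \<psi> a)"
    using a q q01 \<psi> by (simp add: b_def std_hom_imp std_hom_cst r_imp_def)
  obtain n where n: "1 < of_nat n * (of_rat q - \<psi> a)"
    using q ex_less_of_nat_mult[of "of_rat q - \<psi> a" 1] by auto
  have "\<psi> (odot_pow b n) = max 0 (1 - of_nat n * (of_rat q - \<psi> a))"
    using \<psi> b by (simp add: std_hom_odot_pow \<psi>_b)
  also have "\<dots> = 0"
    using n by simp
  finally have "r_imp (\<phi> (odot_pow b n)) (\<psi> (odot_pow b n)) = 0"
    by (simp add: \<phi>_pow r_imp_def)
  moreover have "odot_pow b n \<in> carrier A"
    using b by simp
  ultimately have "0 \<in> (\<lambda>a. r_imp (\<phi> a) (\<psi> a)) ` carrier A"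
    by (rule image_eqI[OF sym])
  moreover have "0 \<le> r_imp (\<phi> x) (\<psi> x)" if "x \<in> carrier A" for x
    using \<phi>_range[OF that] std_hom_range[OF \<psi> that] by (simp add: r_imp_def)
  ultimately have "inf01 ((\<lambda>a. r_imp (\<phi> a) (\<psi> a)) ` carrier A) = 0"
    by (auto intro: inf01_eq_minimum)
  then show ?thesis
    by simp
qed

lemma rel_R_boolean:
  assumes A: "is_pavelka A" and B: "is_pavelka B" and adj: "adjoint_pair A B f g"
    and f_odot: "\<forall>x\<in>carrier A. \<forall>y\<in>carrier A. mv_le B (mv_times B (f x) (f y)) (f (mv_times A x y))"
    and F: "F \<in> spec_M A" and G: "G \<in> spec_M B"
  shows "rel_R A B f F G \<in> {0, 1}"
proof -
  interpret A: pavelka_maximal_filter A F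
    using A F by unfold_locales (auto simp: is_pavelka_def spec_M_def)
  interpret B: pavelka_maximal_filter B G
    using B G by unfold_locales (auto simp: is_pavelka_def spec_M_def)
  have f_closed: "f a \<in> carrier B" if "a \<in> carrier A" for a
    using adj that by (simp add: adjoint_pair_def)
  have f_imp: "f (mv_imp A (cst A r) a) = mv_imp B (cst B r) (f a)"
    if "0 \<le> r" "r \<le> 1" "a \<in> carrier A" for r a
    using adj that by (simp add: adjoint_pair_def)
  have "rel_R A B f F G = inf01 ((\<lambda>a. r_imp (B.val (f a)) (A.val a)) ` carrier A)"
    unfolding rel_R_def by (simp add: A.quot_val_eq_val B.quot_val_eq_val f_closed cong: image_cong)
  also have "\<dots> \<in> {0, 1}"
  proof (rule A.inf01_r_imp_boolean)
    show "std_hom A A.val"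
      by (rule A.std_hom_val)
    show "B.val (f a) \<in> {0..1}" if "a \<in> carrier A" for a
      using that f_closed B.val_range by blast
    show "B.val (f (mv_imp A (cst A r) a)) = r_imp (of_rat r) (B.val (f a))"
      if "0 \<le> r" "r \<le> 1" "a \<in> carrier A" for r a
      using that by (simp add: f_imp f_closed B.std_hom_imp[OF B.std_hom_val] B.val_cst)
    show "r_times (B.val (f a)) (B.val (f b)) \<le> B.val (f (mv_times A a b))"
      if "a \<in> carrier A" "b \<in> carrier A" for a b
    proof -
      have "r_times (B.val (f a)) (B.val (f b)) = B.val (mv_times B (f a) (f b))"
        using that f_closed by (simp add: B.std_hom_odot[OF B.std_hom_val])
      also have "\<dots> \<le> B.val (f (mv_times A a b))"
        using that f_odot f_closed by (simp add: B.std_hom_mono[OF B.std_hom_val])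
      finally show ?thesis .
    qed
  qed
  finally show ?thesis .
qed

theorem theorem10:
  shows "(\<forall>(I :: 'i set) (J :: 'j set) (R :: 'i \<Rightarrow> 'j \<Rightarrow> real) (x :: 'i \<Rightarrow> real) y.
            (\<forall>i\<in>I. \<forall>j\<in>J. R i j \<in> {0, 1}) \<and>
            (\<forall>i\<in>I. x i \<in> {0..1}) \<and> (\<forall>i\<in>I. y i \<in> {0..1}) \<longrightarrow>
            (\<forall>j\<in>J. r_times (f_R I R x j) (f_R I R y j)
                      \<le> f_R I R (\<lambda>i. r_times (x i) (y i)) j))
       \<and>
       (\<forall>(A :: 'a pav) (B :: 'b pav) (f :: 'a \<Rightarrow> 'b) (g :: 'b \<Rightarrow> 'a).
            is_pavelka A \<and> is_pavelka B \<and> semisimple A \<and> semisimple B \<and>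
            adjoint_pair A B f g \<and>
            (\<forall>x\<in>carrier A. \<forall>y\<in>carrier A. mv_le B (mv_times B (f x) (f y)) (f (mv_times A x y)))
            \<longrightarrow>
            (\<forall>F\<in>spec_M A. \<forall>G\<in>spec_M B. rel_R A B f F G \<in> {0, 1}))"
proof (intro conjI allI impI ballI)
  fix I :: "'i set" and J :: "'j set" and R :: "'i \<Rightarrow> 'j \<Rightarrow> real" and x y :: "'i \<Rightarrow> real" and j
  assume "(\<forall>i\<in>I. \<forall>j\<in>J. R i j \<in> {0, 1}) \<and> (\<forall>i\<in>I. x i \<in> {0..1}) \<and> (\<forall>i\<in>I. y i \<in> {0..1})"
    and "j \<in> J"
  then show "r_times (f_R I R x j) (f_R I R y j) \<le> f_R I R (\<lambda>i. r_times (x i) (y i)) j"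
    by (intro f_R_r_times) auto
next
  fix A :: "'a pav" and B :: "'b pav" and f :: "'a \<Rightarrow> 'b" and g :: "'b \<Rightarrow> 'a" and F G
  assume "is_pavelka A \<and> is_pavelka B \<and> semisimple A \<and> semisimple B \<and> adjoint_pair A B f g \<and>
      (\<forall>x\<in>carrier A. \<forall>y\<in>carrier A. mv_le B (mv_times B (f x) (f y)) (f (mv_times A x y)))"
    and "F \<in> spec_M A" "G \<in> spec_M B"
  then show "rel_R A B f F G \<in> {0, 1}"
    using rel_R_boolean[of A B f g F G] by blast
qed

end
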